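(* Let $(\beta_k)_{k\ge1}$ be non-negative reals with $\sum_{k\ge1}k\beta_k<\infty$, let $\beta(t)=\sum_{k\ge1}\beta_k t^k$, let $t^*=\inf\{t\ge0:\beta'(t)+\log(1-t)<0\}$ (so $t^*\in[0,1)$), and let $\gamma(t)=(1-t)\beta''(t)$. Then $\gamma(t^* )\le 1$. *)

theory Defs
  imports "HOL-Analysis.Analysis"
begin

definition beta_gf :: "(nat \<Rightarrow> real) \<Rightarrow> real \<Rightarrow> real" where
  "beta_gf b t = (\<Sum>k. (if k = 0 then 0 else b k) * t ^ k)"

text \<open>t* = inf { t >= 0 : beta'(t) + log(1-t) < 0 }, restricted to t < 1 where log(1-t) is defined.\<close>
definition tstar :: "(nat \<Rightarrow> real) \<Rightarrow> real" where
  "tstar b = Inf {t. 0 \<le> t \<and> t < 1 \<and> deriv (beta_gf b) t + ln (1 - t) < 0}"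

end

theory Submission
  imports Defs
begin

text \<open>Let \<open>f(t) = \<beta>'(t) + log(1 - t)\<close>. Since \<open>\<beta>'\<close> is bounded on \<open>[0,1)\<close> by \<open>\<Sum> k \<beta>\<^sub>k\<close> while
  \<open>log(1 - t) \<rightarrow> -\<infinity>\<close>, the set where \<open>f < 0\<close> is nonempty and \<open>t\<^sup>* \<in> [0,1)\<close>. The power series
  \<open>\<beta>\<close> has radius at least 1, so \<open>f\<close> is differentiable at \<open>t\<^sup>*\<close> with
  \<open>f'(t\<^sup>*) = \<beta>''(t\<^sup>*) - 1/(1 - t\<^sup>*)\<close>. If this were positive, \<open>f\<close> would be increasing near \<open>t\<^sup>*\<close>:
  points of negativity just right of \<open>t\<^sup>*\<close> force \<open>f(t\<^sup>*) < 0\<close>, hence \<open>f < 0\<close> slightly left of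
  \<open>t\<^sup>*\<close>, contradicting minimality unless \<open>t\<^sup>* = 0\<close>; but \<open>f(0) = \<beta>\<^sub>1 \<ge> 0\<close>. So \<open>f'(t\<^sup>*) \<le> 0\<close>,
  which is the claim.\<close>

lemma deriv_powser:
  fixes z :: "'a :: {real_normed_field, banach}"
  assumes "\<And>z. norm z < K \<Longrightarrow> summable (\<lambda>n. c n * z ^ n)" and "norm z < K"
  shows "deriv (\<lambda>z. \<Sum>n. c n * z ^ n) z = (\<Sum>n. diffs c n * z ^ n)"
  using termdiffs_strong'[OF assms] by (rule DERIV_imp_deriv)

lemma has_field_derivative_deriv_powser:
  fixes z :: "'a :: {real_normed_field, banach}"
  assumes summable: "\<And>z. norm z < K \<Longrightarrow> summable (\<lambda>n. c n * z ^ n)" and "norm z < K"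
  shows "(deriv (\<lambda>z. \<Sum>n. c n * z ^ n) has_field_derivative
           deriv (deriv (\<lambda>z. \<Sum>n. c n * z ^ n)) z) (at z)"
proof -
  have "\<And>z. norm z < K \<Longrightarrow> summable (\<lambda>n. diffs c n * z ^ n)"
    using summable by (blast intro: termdiff_converges)
  then have "((\<lambda>z. \<Sum>n. diffs c n * z ^ n) has_field_derivative (\<Sum>n. diffs (diffs c) n * z ^ n)) (at z)"
    using \<open>norm z < K\<close> by (rule termdiffs_strong')
  then have "(deriv (\<lambda>z. \<Sum>n. c n * z ^ n) has_field_derivative (\<Sum>n. diffs (diffs c) n * z ^ n)) (at z)"
    by (rule has_field_derivative_transform_within_open[where S = "ball 0 K"])
       (use assms in \<open>auto simp: deriv_powser[OF summable]\<close>)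
  then show ?thesis using DERIV_deriv_iff_has_field_derivative by blast
qed

lemma summable_powser_of_summable:
  fixes c :: "nat \<Rightarrow> 'a :: {banach, real_normed_div_algebra}"
  assumes "summable c" and "norm z < 1"
  shows "summable (\<lambda>n. c n * z ^ n)"
proof (rule summable_in_conv_radius)
  have "ereal (norm z) < norm (1 :: 'a)" using assms(2) by simp
  also have "\<dots> \<le> conv_radius c" using assms(1) by (intro conv_radius_geI) simp
  finally show "ereal (norm z) < conv_radius c" .
qed

lemma powser_le_suminf:
  fixes c :: "nat \<Rightarrow> real"
  assumes "\<And>n. c n \<ge> 0" "summable c" "0 \<le> t" "t \<le> 1"
  shows "(\<Sum>n. c n * t ^ n) \<le> (\<Sum>n. c n)"
proof (rule suminf_le)
  show "summable (\<lambda>n. c n * t ^ n)"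
    using assms by (intro summable_comparison_test[OF _ \<open>summable c\<close>])
                   (auto intro!: mult_left_le power_le_one)
  show "c n * t ^ n \<le> c n" for n
    using assms by (auto intro!: mult_left_le power_le_one)
qed fact

lemma deriv_nonpos_at_Inf_negativity_set:
  fixes f :: "real \<Rightarrow> real" and lo hi :: real
  defines "S \<equiv> {t. lo \<le> t \<and> t < hi \<and> f t < 0}"
  assumes deriv: "(f has_real_derivative D) (at (Inf S))"
    and nonempty: "S \<noteq> {}"
    and nonneg_lo: "f lo \<ge> 0"
  shows "D \<le> 0"
proof (rule ccontr)
  assume "\<not> D \<le> 0"
  then have "D > 0" by simp
  let ?a = "Inf S"
  have bdd: "bdd_below S" unfolding S_def by (rule bdd_belowI[of _ lo]) auto
  have lo_le: "lo \<le> ?a" using nonempty by (intro cInf_greatest) (auto simp: S_def)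
  obtain d where "d > 0" and inc_right: "\<And>h. h > 0 \<Longrightarrow> h < d \<Longrightarrow> f ?a < f (?a + h)"
    using DERIV_pos_inc_right[OF deriv \<open>D > 0\<close>] by blast
  obtain d' where "d' > 0" and inc_left: "\<And>h. h > 0 \<Longrightarrow> h < d' \<Longrightarrow> f (?a - h) < f ?a"
    using DERIV_pos_inc_left[OF deriv \<open>D > 0\<close>] by blast
  obtain t where "t \<in> S" "t < ?a + d"
    using cInf_lessD[OF nonempty, of "?a + d"] \<open>d > 0\<close> by auto
  have "?a \<le> t" using cInf_lower[OF \<open>t \<in> S\<close> bdd] .
  have "f t < 0" "t < hi" using \<open>t \<in> S\<close> by (auto simp: S_def)
  have "f ?a < 0"
  proof (cases "t = ?a")
    case False
    then have "f ?a < f t" using inc_right[of "t - ?a"] \<open>?a \<le> t\<close> \<open>t < ?a + d\<close> by auto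
    with \<open>f t < 0\<close> show ?thesis by simp
  qed (use \<open>f t < 0\<close> in simp)
  with nonneg_lo lo_le have "lo < ?a" by (cases "lo = ?a") auto
  define h where "h = min (d' / 2) (?a - lo)"
  have "h > 0" "h < d'" "h \<le> ?a - lo" using \<open>lo < ?a\<close> \<open>d' > 0\<close> by (auto simp: h_def)
  then have "?a - h \<in> S"
    using inc_left[of h] \<open>f ?a < 0\<close> \<open>?a \<le> t\<close> \<open>t < hi\<close> by (auto simp: S_def)
  with cInf_lower[OF _ bdd] \<open>h > 0\<close> show False by force
qed

lemma beta_gf_eq_powser: "beta_gf b = (\<lambda>t. \<Sum>k. (if k = 0 then 0 else b k) * t ^ k)"
  by (simp add: beta_gf_def fun_eq_iff)

lemma diffs_beta_coeffs: "diffs (\<lambda>k. if k = 0 then 0 else b k) = (\<lambda>n. real (Suc n) * b (Suc n))"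
  by (simp add: diffs_def fun_eq_iff)

context
  fixes b :: "nat \<Rightarrow> real"
  assumes nonneg: "\<And>k. k \<ge> 1 \<Longrightarrow> b k \<ge> 0"
    and summable_moment: "summable (\<lambda>k. real k * b k)"
begin

lemma summable_beta_powser:
  assumes "norm t < 1"
  shows "summable (\<lambda>k. (if k = 0 then 0 else b k) * t ^ k)"
proof (rule summable_powser_of_summable[OF _ assms])
  have "norm (if k = 0 then 0 else b k) \<le> real k * b k" if "k \<ge> 1" for k
    using nonneg[OF that] that by (simp add: mult_le_cancel_right1)
  then show "summable (\<lambda>k. if k = 0 then 0 else b k)"
    by (intro summable_comparison_test[OF _ summable_moment]) blast
qed

lemma deriv_beta_gf:
  assumes "\<bar>t\<bar> < 1"
  shows "deriv (beta_gf b) t = (\<Sum>n. real (Suc n) * b (Suc n) * t ^ n)"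
proof -
  have "deriv (\<lambda>t. \<Sum>k. (if k = 0 then 0 else b k) * t ^ k) t
        = (\<Sum>n. diffs (\<lambda>k. if k = 0 then 0 else b k) n * t ^ n)"
    by (rule deriv_powser[where K = 1]) (use assms summable_beta_powser in auto)
  then show ?thesis by (simp add: beta_gf_eq_powser diffs_beta_coeffs)
qed

lemma has_real_derivative_deriv_beta_gf:
  assumes "\<bar>t\<bar> < 1"
  shows "(deriv (beta_gf b) has_real_derivative deriv (deriv (beta_gf b)) t) (at t)"
  unfolding beta_gf_eq_powser
  by (rule has_field_derivative_deriv_powser[where K = 1]) (use assms summable_beta_powser in auto)

lemma summable_deriv_beta_coeffs: "summable (\<lambda>n. real (Suc n) * b (Suc n))"
  using summable_moment summable_Suc_iff[where f = "\<lambda>k. real k * b k"] by simp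

lemma deriv_beta_gf_le:
  assumes "0 \<le> t" "t < 1"
  shows "deriv (beta_gf b) t \<le> (\<Sum>n. real (Suc n) * b (Suc n))"
  using assms nonneg summable_deriv_beta_coeffs
  by (simp add: deriv_beta_gf powser_le_suminf)

lemma deriv_beta_gf_0_nonneg: "deriv (beta_gf b) 0 \<ge> 0"
  using nonneg[of 1] by (simp add: deriv_beta_gf)

lemma deriv_beta_gf_plus_ln_negative: "\<exists>t. 0 \<le> t \<and> t < 1 \<and> deriv (beta_gf b) t + ln (1 - t) < 0"
proof -
  define M where "M = (\<Sum>n. real (Suc n) * b (Suc n))"
  define t where "t = 1 - exp (- (M + 1))"
  have "M \<ge> 0"
    unfolding M_def using nonneg summable_deriv_beta_coeffs by (intro suminf_nonneg) auto
  then have "0 \<le> t" "t < 1" by (auto simp: t_def)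
  moreover have "ln (1 - t) = - (M + 1)" by (simp add: t_def)
  ultimately show ?thesis using deriv_beta_gf_le[of t] by (auto simp: M_def)
qed

end

theorem lemma7:
  fixes b :: "nat \<Rightarrow> real"
  assumes nonneg: "\<And>k. k \<ge> 1 \<Longrightarrow> b k \<ge> 0"
    and summ: "summable (\<lambda>k. real k * b k)"
  shows "(1 - tstar b) * deriv (deriv (beta_gf b)) (tstar b) \<le> 1"
proof -
  define f where "f t = deriv (beta_gf b) t + ln (1 - t)" for t
  define S where "S = {t. 0 \<le> t \<and> t < 1 \<and> f t < 0}"
  have tstar: "tstar b = Inf S" by (simp add: tstar_def S_def f_def)
  obtain t where "t \<in> S"
    using deriv_beta_gf_plus_ln_negative[OF assms] by (auto simp: S_def f_def)
  have "bdd_below S" unfolding S_def by (rule bdd_belowI[of _ 0]) auto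
  have "0 \<le> tstar b" unfolding tstar using \<open>t \<in> S\<close> by (intro cInf_greatest) (auto simp: S_def)
  have "tstar b \<le> t" unfolding tstar using \<open>t \<in> S\<close> \<open>bdd_below S\<close> by (rule cInf_lower)
  with \<open>t \<in> S\<close> have "tstar b < 1" by (simp add: S_def)
  with \<open>0 \<le> tstar b\<close> have "(f has_real_derivative deriv (deriv (beta_gf b)) (tstar b) - 1 / (1 - tstar b)) (at (tstar b))"
    unfolding f_def
    by (auto intro!: derivative_eq_intros has_real_derivative_deriv_beta_gf[OF assms] simp: field_simps)
  then have "deriv (deriv (beta_gf b)) (tstar b) - 1 / (1 - tstar b) \<le> 0"
    unfolding tstar S_def
    by (rule deriv_nonpos_at_Inf_negativity_set)
       (use \<open>t \<in> S\<close> deriv_beta_gf_0_nonneg[OF assms] in \<open>auto simp: S_def f_def\<close>)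
  with \<open>tstar b < 1\<close> show ?thesis by (simp add: field_simps)
qed

end
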